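(* Let $f$ be a Riemann-integrable function on $[0,1]$, let $L=\int_0^1f(x)\,dx$, and for $\varepsilon>0$ define \[D=\{x\in[0,1]: f(x)<0\},\qquad L_\varepsilon=\{x\in[0,1]: f(x)\in[0,L+\varepsilon]\}.\] Then at least one of the following holds: (i) $\left|\int_Df(x)\,dx\right|\ge\frac\varepsilon2$; (ii) $\mu(L_\varepsilon\cup D)\ge\frac{\varepsilon}{2(L+\varepsilon)}$, where $\mu$ denotes Lebesgue measure. *)

theory Defs
  imports "HOL-Analysis.Analysis"
begin

text \<open>Riemann integral on a compact interval: limit of Riemann sums over tagged
divisions of mesh less than delta (constant gauge of radius delta).\<close>
definition has_riemann_integral :: "(real \<Rightarrow> real) \<Rightarrow> real \<Rightarrow> real set \<Rightarrow> bool"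
  (infixr \<open>has'_riemann'_integral\<close> 46) where
  "(f has_riemann_integral I) S \<longleftrightarrow>
     (\<forall>e>0. \<exists>d>0. \<forall>p. p tagged_division_of S \<and> (\<lambda>x. ball x d) fine p \<longrightarrow>
        \<bar>(\<Sum>(x,K)\<in>p. Henstock_Kurzweil_Integration.content K * f x) - I\<bar> < e)"

end

theory Submission
  imports Defs
begin

text \<open>A Riemann integrable function is bounded (moving a single tag of a fine uniform
partition changes the Riemann sum by less than 2), hence Lebesgue integrable with the same
integral. For \<open>c = L + \<epsilon> > 0\<close> the set \<open>L\<^sub>\<epsilon> \<union> D\<close> is the sublevel set \<open>{f \<le> c}\<close> in \<open>[0,1]\<close>,
and integrating the pointwise bound \<open>f \<ge> f [f < 0] + c [f > c]\<close> over \<open>[0,1]\<close> (Iverson brackets)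
gives \<open>L \<ge> \<integral>\<^sub>D f + c (1 - \<mu>(L\<^sub>\<epsilon> \<union> D))\<close>. Hence \<open>\<integral>\<^sub>D f > -\<epsilon>/2\<close> forces \<open>c \<mu>(L\<^sub>\<epsilon> \<union> D) > \<epsilon>/2\<close>.
If \<open>L + \<epsilon> \<le> 0\<close>, alternative (ii) holds trivially.\<close>

lemma UN_uniform_intervals:
  fixes a h :: real
  assumes "0 < N" "0 \<le> h"
  shows "(\<Union>k<N. {a + real k * h .. a + real (Suc k) * h}) = {a .. a + real N * h}"
  using assms(1)
proof (induction N rule: nat_induct_non_zero)
  case 1
  show ?case using assms(2) by (simp add: lessThan_Suc)
next
  case (Suc N)
  have "(\<Union>k<Suc N. {a + real k * h .. a + real (Suc k) * h})
      = {a .. a + real N * h} \<union> {a + real N * h .. a + real (Suc N) * h}"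
    unfolding lessThan_Suc UN_insert Suc.IH by (rule Un_commute)
  also have "\<dots> = {a .. a + real (Suc N) * h}"
    using assms(2) by (intro ivl_disj_un_two_touch(4)) (simp_all add: algebra_simps)
  finally show ?case .
qed

lemma uniform_tagged_division:
  fixes a h d :: real and N :: nat and \<tau> :: "nat \<Rightarrow> real"
  assumes "0 < N" "0 < h"
    and tags: "\<And>k. k < N \<Longrightarrow> \<tau> k \<in> {a + real k * h .. a + real (Suc k) * h}"
  defines "p \<equiv> (\<lambda>k. (\<tau> k, {a + real k * h .. a + real (Suc k) * h})) ` {..<N}"
  shows "p tagged_division_of {a .. a + real N * h}"
    and "h < d \<Longrightarrow> (\<lambda>x. ball x d) fine p"
    and "(\<Sum>(x,K)\<in>p. Henstock_Kurzweil_Integration.content K * f x) = h * (\<Sum>k<N. f (\<tau> k))"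
proof -
  let ?I = "\<lambda>k. {a + real k * h .. a + real (Suc k) * h}"
  have disjoint: "interior (?I k1) \<inter> interior (?I k2) = {}" if "k1 < k2" for k1 k2
  proof -
    have "a + real (Suc k1) * h \<le> a + real k2 * h"
      using that \<open>0 < h\<close> by (intro add_left_mono mult_right_mono) auto
    then show ?thesis by auto
  qed
  show "p tagged_division_of {a .. a + real N * h}"
  proof (rule tagged_division_ofI)
    have "\<Union>{K. \<exists>x. (x,K) \<in> p} = (\<Union>k<N. ?I k)"
      unfolding p_def by blast
    then show "\<Union>{K. \<exists>x. (x,K) \<in> p} = {a .. a + real N * h}"
      using UN_uniform_intervals[OF \<open>0 < N\<close>, of h a] \<open>0 < h\<close> by simp
    show "interior K1 \<inter> interior K2 = {}"
      if members: "(x1,K1) \<in> p" "(x2,K2) \<in> p" "(x1,K1) \<noteq> (x2,K2)" for x1 K1 x2 K2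
    proof -
      obtain k1 k2 where "K1 = ?I k1" "K2 = ?I k2" "k1 \<noteq> k2"
        using members unfolding p_def by auto
      then show ?thesis
        using disjoint[of k1 k2] disjoint[of k2 k1] by (metis Int_commute nat_neq_iff)
    qed
  qed (use tags UN_uniform_intervals[OF \<open>0 < N\<close>, of h a] \<open>0 < h\<close> in \<open>auto simp: p_def\<close>)
  show "(\<lambda>x. ball x d) fine p" if "h < d"
  proof (rule fineI)
    fix x K assume "(x,K) \<in> p"
    then obtain k where "k < N" "x = \<tau> k" "K = ?I k" unfolding p_def by auto
    then show "K \<subseteq> ball x d"
      using tags[of k] that by (auto simp: dist_real_def algebra_simps)
  qed
  have "inj_on (\<lambda>k. (\<tau> k, ?I k)) {..<N}"
    using \<open>0 < h\<close> by (intro inj_onI) auto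
  then show "(\<Sum>(x,K)\<in>p. Henstock_Kurzweil_Integration.content K * f x) = h * (\<Sum>k<N. f (\<tau> k))"
    using \<open>0 < h\<close> by (simp add: p_def sum.reindex sum_distrib_left algebra_simps)
qed

lemma has_riemann_integral_bounded:
  fixes f :: "real \<Rightarrow> real"
  assumes "(f has_riemann_integral I) {a..b}"
  obtains B where "\<And>x. x \<in> {a..b} \<Longrightarrow> \<bar>f x\<bar> \<le> B"
proof (cases "a < b")
  case False
  then have "{a..b} \<subseteq> {a}" by auto
  then show ?thesis by (intro that[of "\<bar>f a\<bar>"]) auto
next
  case True
  obtain d where "0 < d" and riemann_sum_close: "\<And>p. p tagged_division_of {a..b} \<Longrightarrow>
      (\<lambda>x. ball x d) fine p \<Longrightarrow> \<bar>(\<Sum>(x,K)\<in>p. Henstock_Kurzweil_Integration.content K * f x) - I\<bar> < 1"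
    using assms unfolding has_riemann_integral_def by (meson zero_less_one)
  obtain N :: nat where "(b - a) / d < real N"
    using reals_Archimedean2 by blast
  define h where "h = (b - a) / N"
  have "0 < N"
    using \<open>(b - a) / d < N\<close> \<open>0 < d\<close> \<open>a < b\<close> by (auto intro!: Nat.gr0I simp: divide_less_0_iff)
  then have "0 < h" "h < d" "b = a + real N * h"
    using \<open>(b - a) / d < N\<close> \<open>0 < d\<close> \<open>a < b\<close> by (auto simp: h_def field_simps)
  let ?I = "\<lambda>k. {a + real k * h .. a + real (Suc k) * h}"
  have sum_close: "\<bar>h * (\<Sum>k<N. f (\<tau> k)) - I\<bar> < 1" if tags: "\<And>k. k < N \<Longrightarrow> \<tau> k \<in> ?I k" for \<tau>
    using riemann_sum_close[OF _ uniform_tagged_division(2)[OF \<open>0 < N\<close> \<open>0 < h\<close> tags \<open>h < d\<close>]]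
      uniform_tagged_division(1,3)[OF \<open>0 < N\<close> \<open>0 < h\<close> tags] \<open>b = a + real N * h\<close>
    by metis
  define \<tau> where "\<tau> k = a + real k * h" for k
  have \<tau>_tags: "\<tau> k \<in> ?I k" for k
    using \<open>0 < h\<close> by (simp add: \<tau>_def)
  show ?thesis
  proof (rule that)
    fix x assume "x \<in> {a..b}"
    then have "x \<in> (\<Union>k<N. ?I k)"
      using UN_uniform_intervals[OF \<open>0 < N\<close> less_imp_le[OF \<open>0 < h\<close>], of a] \<open>b = a + real N * h\<close>
      by simp
    then obtain k where "k < N" "x \<in> ?I k"
      by blast
    define S where "S = (\<Sum>j<N. f (\<tau> j))"
    define S' where "S' = (\<Sum>j<N. f ((\<tau>(k := x)) j))"
    have "\<bar>h * S' - I\<bar> < 1"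
      unfolding S'_def using \<open>x \<in> ?I k\<close> \<tau>_tags by (intro sum_close) auto
    moreover have "\<bar>h * S - I\<bar> < 1"
      unfolding S_def using \<tau>_tags by (rule sum_close)
    moreover have "S' = S + (f x - f (\<tau> k))"
      unfolding S_def S'_def using \<open>k < N\<close>
      by (auto simp: sum.remove[of "{..<N}" k] intro!: sum.cong)
    ultimately have "\<bar>h * (f x - f (\<tau> k))\<bar> < 2"
      by (simp add: algebra_simps)
    then have "\<bar>f x - f (\<tau> k)\<bar> < 2 / h"
      using \<open>0 < h\<close> by (simp add: abs_mult pos_less_divide_eq mult.commute)
    moreover have "\<bar>f (\<tau> k)\<bar> \<le> (\<Sum>j<N. \<bar>f (\<tau> j)\<bar>)"
      using \<open>k < N\<close> by (intro member_le_sum) auto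
    ultimately show "\<bar>f x\<bar> \<le> (\<Sum>j<N. \<bar>f (\<tau> j)\<bar>) + 2 / h"
      by linarith
  qed
qed

lemma has_riemann_integral_imp_has_integral:
  assumes "(f has_riemann_integral I) {a..b}"
  shows "(f has_integral I) {a..b}"
  unfolding has_integral_real
proof (intro allI impI)
  fix e :: real assume "0 < e"
  then obtain d where "0 < d" and "\<forall>p. p tagged_division_of {a..b} \<and> (\<lambda>x. ball x d) fine p \<longrightarrow>
      \<bar>(\<Sum>(x,K)\<in>p. Henstock_Kurzweil_Integration.content K * f x) - I\<bar> < e"
    using assms unfolding has_riemann_integral_def by blast
  then show "\<exists>\<gamma>. gauge \<gamma> \<and> (\<forall>p. p tagged_division_of {a..b} \<and> \<gamma> fine p \<longrightarrow>
      norm ((\<Sum>(x,K)\<in>p. Henstock_Kurzweil_Integration.content K *\<^sub>R f x) - I) < e)"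
    by (intro exI[of _ "\<lambda>x. ball x d"]) auto
qed

lemma has_riemann_integral_imp_set_integrable:
  fixes f :: "real \<Rightarrow> real"
  assumes "(f has_riemann_integral I) {a..b}"
  shows "set_integrable lebesgue {a..b} f"
    and "(LINT x:{a..b}|lebesgue. f x) = I"
proof -
  have hk: "(f has_integral I) {a..b}"
    using assms by (rule has_riemann_integral_imp_has_integral)
  obtain B where "\<And>x. x \<in> {a..b} \<Longrightarrow> \<bar>f x\<bar> \<le> B"
    using has_riemann_integral_bounded[OF assms] by blast
  then show integrable: "set_integrable lebesgue {a..b} f"
    using hk by (intro absolutely_integrable_integrable_bound[where g = "\<lambda>_. B"]) auto
  show "(LINT x:{a..b}|lebesgue. f x) = I"
    using set_lebesgue_integral_eq_integral(2)[OF integrable] hk by (simp add: integral_unique)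
qed

lemma set_integral_ge_negative_part_plus_measure:
  fixes f :: "'a \<Rightarrow> real"
  assumes f: "set_integrable M S f" and S: "S \<in> sets M" "emeasure M S < \<infinity>" and "0 \<le> c"
  shows "(LINT x:{x \<in> S. f x < 0}|M. f x) + c * (measure M S - measure M {x \<in> S. f x \<le> c})
           \<le> (LINT x:S|M. f x)"
proof -
  define D where "D = {x \<in> S. f x < 0}"
  define U where "U = {x \<in> S. c < f x}"
  define g where "g = (\<lambda>x. indicator S x * f x)"
  have "integrable M g"
    using f by (simp add: set_integrable_def g_def)
  then have [measurable]: "g \<in> borel_measurable M" by auto
  have "D = {x \<in> space M. g x < 0}" "U = {x \<in> space M. c < g x}"
    using sets.sets_into_space[OF S(1)] \<open>0 \<le> c\<close>
    by (auto simp: D_def U_def g_def indicator_def)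
  then have [measurable]: "D \<in> sets M" "U \<in> sets M" by auto
  have "D \<subseteq> S" "U \<subseteq> S" by (auto simp: D_def U_def)
  have "set_integrable M D f"
    using set_integrable_subset[OF f] \<open>D \<subseteq> S\<close> by simp
  have "emeasure M U < \<infinity>"
    using emeasure_mono[OF \<open>U \<subseteq> S\<close> S(1)] S(2) by order
  then have "integrable M (\<lambda>x. c * indicator U x)" by simp
  have "{x \<in> S. f x \<le> c} = S - U"
    by (auto simp: U_def)
  then have "measure M {x \<in> S. f x \<le> c} = measure M S - measure M U"
    using measure_Diff[of M S U] S \<open>U \<in> sets M\<close> \<open>U \<subseteq> S\<close> by simp
  then have "(LINT x:D|M. f x) + c * (measure M S - measure M {x \<in> S. f x \<le> c})
      = (\<integral>x. indicator D x * f x + c * indicator U x \<partial>M)"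
    using \<open>set_integrable M D f\<close> \<open>integrable M (\<lambda>x. c * indicator U x)\<close>
    by (simp add: set_lebesgue_integral_def set_integrable_def)
  also have "\<dots> \<le> (\<integral>x. g x \<partial>M)"
    using \<open>set_integrable M D f\<close> \<open>integrable M (\<lambda>x. c * indicator U x)\<close> \<open>integrable M g\<close> \<open>0 \<le> c\<close>
    by (intro integral_mono) (auto simp: set_integrable_def D_def U_def g_def indicator_def)
  also have "\<dots> = (LINT x:S|M. f x)"
    by (simp add: set_lebesgue_integral_def g_def)
  finally show ?thesis by (simp add: D_def)
qed

theorem lemma3p14:
  fixes f :: "real \<Rightarrow> real" and L \<epsilon> :: real and D L\<^sub>\<epsilon> :: "real set"
  assumes "(f has_riemann_integral L) {0..1}"
    and "\<epsilon> > 0"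
    and "D = {x \<in> {0..1}. f x < 0}"
    and "L\<^sub>\<epsilon> = {x \<in> {0..1}. f x \<in> {0..L + \<epsilon>}}"
  shows "\<bar>LINT x:D|lebesgue. f x\<bar> \<ge> \<epsilon> / 2
         \<or> measure lebesgue (L\<^sub>\<epsilon> \<union> D) \<ge> \<epsilon> / (2 * (L + \<epsilon>))"
proof (cases "0 < L + \<epsilon>")
  case False
  then have "\<epsilon> / (2 * (L + \<epsilon>)) \<le> 0"
    using \<open>\<epsilon> > 0\<close> by (intro divide_nonneg_nonpos) auto
  then show ?thesis
    using measure_nonneg[of lebesgue "L\<^sub>\<epsilon> \<union> D"] by linarith
next
  case True
  have sublevel: "L\<^sub>\<epsilon> \<union> D = {x \<in> {0..1}. f x \<le> L + \<epsilon>}"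
    using True by (auto simp: assms(3,4))
  have "(LINT x:D|lebesgue. f x) + (L + \<epsilon>) * (1 - measure lebesgue (L\<^sub>\<epsilon> \<union> D)) \<le> L"
    using set_integral_ge_negative_part_plus_measure[OF
        has_riemann_integral_imp_set_integrable(1)[OF assms(1)], of "L + \<epsilon>",
        folded assms(3) sublevel]
      has_riemann_integral_imp_set_integrable(2)[OF assms(1)] True
    by simp
  then have "\<bar>LINT x:D|lebesgue. f x\<bar> < \<epsilon> / 2 \<Longrightarrow> \<epsilon> / 2 \<le> (L + \<epsilon>) * measure lebesgue (L\<^sub>\<epsilon> \<union> D)"
    by (simp add: algebra_simps)
  then show ?thesis
    using True by (metis not_le divide_divide_eq_left pos_divide_le_eq mult.commute)
qed

end
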